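(* Let $1\le p\ne q<\infty$. No operators $T\in B(\ell^p)$ and $S\in B(\ell^q)$ are equivalent after one-sided extension.
   Context: $\ell^p=\ell^p(\mathbb N)$ over $\mathbb C$; $B(X,Y)$ denotes bounded linear operators; invertibility means bounded inverse; $X\oplus Y$ is the $\ell^2$-direct sum and $\mathrm{id}_X$ the identity. Operators $T\in B(X)$ and $S\in B(Y)$ are equivalent after extension if there exist Banach spaces $X'$, $Y'$ and invertible $E\in B(Y\oplus Y',X\oplus X')$, $F\in B(X\oplus X',Y\oplus Y')$ with $\begin{bmatrix}T&0\\0&\mathrm{id}_{X'}\end{bmatrix}=E\begin{bmatrix}S&0\\0&\mathrm{id}_{Y'}\end{bmatrix}F$. They are equivalent after one-sided extension if this holds with one of $X'$ or $Y'$ equal to the trivial space $\{0\}$. *)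

theory Defs
  imports "HOL-Analysis.Analysis"
begin

record 'a nspace =
  carrier :: "'a set"
  vadd :: "'a \<Rightarrow> 'a \<Rightarrow> 'a"
  vscl :: "complex \<Rightarrow> 'a \<Rightarrow> 'a"
  vnorm :: "'a \<Rightarrow> real"

definition lp_space :: "real \<Rightarrow> (nat \<Rightarrow> complex) nspace" where
  "lp_space p = \<lparr> carrier = {x. summable (\<lambda>n. cmod (x n) powr p)},
                 vadd = (\<lambda>x y n. x n + y n),
                 vscl = (\<lambda>c x n. c * x n),
                 vnorm = (\<lambda>x. (\<Sum>n. cmod (x n) powr p) powr (1 / p)) \<rparr>"

definition complex_banach :: "(complex \<Rightarrow> 'a::ab_group_add \<Rightarrow> 'a) \<Rightarrow> ('a \<Rightarrow> real) \<Rightarrow> bool" where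
  "complex_banach sc nm \<longleftrightarrow>
     vector_space sc \<and>
     (\<forall>x. nm x = 0 \<longleftrightarrow> x = 0) \<and>
     (\<forall>x y. nm (x + y) \<le> nm x + nm y) \<and>
     (\<forall>c x. nm (sc c x) = cmod c * nm x) \<and>
     (\<forall>X :: nat \<Rightarrow> 'a.
        (\<forall>e>0. \<exists>N. \<forall>m\<ge>N. \<forall>n\<ge>N. nm (X m - X n) < e) \<longrightarrow>
        (\<exists>l. \<forall>e>0. \<exists>N. \<forall>n\<ge>N. nm (X n - l) < e))"

definition type_space :: "(complex \<Rightarrow> 'a::ab_group_add \<Rightarrow> 'a) \<Rightarrow> ('a \<Rightarrow> real) \<Rightarrow> 'a nspace" where
  "type_space sc nm = \<lparr> carrier = UNIV, vadd = (+), vscl = sc, vnorm = nm \<rparr>"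

definition dsum :: "'a nspace \<Rightarrow> 'b nspace \<Rightarrow> ('a \<times> 'b) nspace" where
  "dsum A B = \<lparr> carrier = carrier A \<times> carrier B,
               vadd = (\<lambda>(a, b) (c, d). (vadd A a c, vadd B b d)),
               vscl = (\<lambda>z (a, b). (vscl A z a, vscl B z b)),
               vnorm = (\<lambda>(a, b). sqrt ((vnorm A a)\<^sup>2 + (vnorm B b)\<^sup>2)) \<rparr>"

text \<open>Bounded linear operators from A to B (only the values on the carrier matter).\<close>
definition bop :: "'a nspace \<Rightarrow> 'b nspace \<Rightarrow> ('a \<Rightarrow> 'b) \<Rightarrow> bool" where
  "bop A B f \<longleftrightarrow>
     (\<forall>x\<in>carrier A. f x \<in> carrier B) \<and>
     (\<forall>x\<in>carrier A. \<forall>y\<in>carrier A. f (vadd A x y) = vadd B (f x) (f y)) \<and>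
     (\<forall>c. \<forall>x\<in>carrier A. f (vscl A c x) = vscl B c (f x)) \<and>
     (\<exists>C. \<forall>x\<in>carrier A. vnorm B (f x) \<le> C * vnorm A x)"

definition inv_bop :: "'a nspace \<Rightarrow> 'b nspace \<Rightarrow> ('a \<Rightarrow> 'b) \<Rightarrow> bool" where
  "inv_bop A B f \<longleftrightarrow> bop A B f \<and>
     (\<exists>g. bop B A g \<and> (\<forall>x\<in>carrier A. g (f x) = x) \<and> (\<forall>y\<in>carrier B. f (g y) = y))"

end

theory Submission
  imports Defs
begin

text \<open>An additive map \<open>J\<close> from l^q to l^p with \<open>||x||_q\<close> comparable to \<open>||J x||_p\<close>
  cannot exist for \<open>p \<noteq> q\<close>. The images of the unit vectors are bounded, so a subsequence of
  them converges coordinatewise; differences of its terms give vectors \<open>d\<^sub>j\<close> with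
  \<open>||d\<^sub>j||_q^q = 2\<close> whose images are coordinatewise null and bounded away from zero. By a
  gliding hump argument, a further subsequence has essentially disjointly supported images, so
  \<open>||J (d\<^sub>1 + ... + d\<^sub>N)||_p^p\<close> grows like \<open>N\<close>, whereas
  \<open>||d\<^sub>1 + ... + d\<^sub>N||_q^q = 2 N\<close> forces growth like \<open>N^(p/q)\<close>. An invertible
  operator from l^q \<oplus> Y onto l^p restricts to such a \<open>J\<close> on l^q \<oplus> 0, which excludes
  both one-sided extensions.

  Norms are handled through \<open>p\<close>-th power sums and the quasi-triangle inequality
  \<open>|a + b|^p \<le> 2^p (|a|^p + |b|^p)\<close>.\<close>

section \<open>Power sums of sequences\<close>

definition lp_set :: "real \<Rightarrow> (nat \<Rightarrow> complex) set" where
  "lp_set p = {x. summable (\<lambda>n. cmod (x n) powr p)}"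

definition lp_powsum :: "real \<Rightarrow> (nat \<Rightarrow> complex) \<Rightarrow> real" where
  "lp_powsum p x = (\<Sum>n. cmod (x n) powr p)"

lemma carrier_lp_space [simp]: "carrier (lp_space p) = lp_set p"
  by (simp add: lp_space_def lp_set_def)

lemma vadd_lp_space [simp]: "vadd (lp_space p) x y = (\<lambda>n. x n + y n)"
  by (simp add: lp_space_def)

lemma vnorm_lp_space [simp]: "vnorm (lp_space p) x = lp_powsum p x powr (1 / p)"
  by (simp add: lp_space_def lp_powsum_def)

lemma norm_add_powr_le:
  fixes a b :: "'a::real_normed_vector"
  assumes "0 \<le> p"
  shows "norm (a + b) powr p \<le> 2 powr p * (norm a powr p + norm b powr p)"
proof -
  have "norm (a + b) \<le> 2 * max (norm a) (norm b)"
    using norm_triangle_ineq[of a b] by linarith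
  then have "norm (a + b) powr p \<le> (2 * max (norm a) (norm b)) powr p"
    by (simp add: assms powr_mono2)
  also have "\<dots> = 2 powr p * max (norm a) (norm b) powr p"
    by (simp add: powr_mult)
  also have "max (norm a) (norm b) powr p \<le> norm a powr p + norm b powr p"
    by (simp add: max_def)
  finally show ?thesis
    by (simp add: mult_left_mono)
qed

lemma lp_powsum_nonneg: "x \<in> lp_set p \<Longrightarrow> 0 \<le> lp_powsum p x"
  unfolding lp_powsum_def lp_set_def by (rule suminf_nonneg) auto

lemma lp_set_finite_support:
  assumes "finite A" and "\<And>k. k \<notin> A \<Longrightarrow> x k = 0"
  shows "x \<in> lp_set p" and "lp_powsum p x = (\<Sum>k\<in>A. cmod (x k) powr p)"
  using summable_finite[of A "\<lambda>k. cmod (x k) powr p"] suminf_finite[of A "\<lambda>k. cmod (x k) powr p"]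
    assms by (auto simp: lp_set_def lp_powsum_def)

lemma lp_set_add:
  assumes "0 \<le> p" and "x \<in> lp_set p" and "y \<in> lp_set p"
  shows "(\<lambda>k. x k + y k) \<in> lp_set p"
  unfolding lp_set_def mem_Collect_eq
proof (rule summable_comparison_test)
  show "summable (\<lambda>n. 2 powr p * (cmod (x n) powr p + cmod (y n) powr p))"
    using assms by (auto simp: lp_set_def intro: summable_mult summable_add)
qed (use norm_add_powr_le[OF assms(1)] in auto)

lemma lp_powsum_add_le:
  assumes "0 \<le> p" and x: "x \<in> lp_set p" and y: "y \<in> lp_set p"
  shows "lp_powsum p (\<lambda>k. x k + y k) \<le> 2 powr p * (lp_powsum p x + lp_powsum p y)"
proof -
  have "lp_powsum p (\<lambda>k. x k + y k) \<le> (\<Sum>n. 2 powr p * (cmod (x n) powr p + cmod (y n) powr p))"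
    unfolding lp_powsum_def using lp_set_add[OF assms] x y
    by (intro suminf_le norm_add_powr_le assms(1))
       (auto simp: lp_set_def intro: summable_mult summable_add)
  also have "\<dots> = 2 powr p * (lp_powsum p x + lp_powsum p y)"
    using x y by (simp add: lp_powsum_def lp_set_def suminf_mult summable_add suminf_add[symmetric])
  finally show ?thesis .
qed

lemma lp_set_uminus_iff [simp]: "(\<lambda>k. - x k) \<in> lp_set p \<longleftrightarrow> x \<in> lp_set p"
  by (simp add: lp_set_def)

lemma lp_powsum_uminus [simp]: "lp_powsum p (\<lambda>k. - x k) = lp_powsum p x"
  by (simp add: lp_powsum_def)

lemma lp_powsum_add_disjoint:
  assumes "x \<in> lp_set p" and "y \<in> lp_set p" and "\<And>k. x k = 0 \<or> y k = 0"
  shows "lp_powsum p (\<lambda>k. x k + y k) = lp_powsum p x + lp_powsum p y"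
proof -
  have "cmod (x n + y n) powr p = cmod (x n) powr p + cmod (y n) powr p" for n
    using assms(3)[of n] by auto
  then show ?thesis
    using assms(1,2) by (simp add: lp_powsum_def lp_set_def suminf_add)
qed

lemma lp_set_sum:
  fixes N :: nat
  assumes "0 \<le> p" and "\<And>i. i < N \<Longrightarrow> x i \<in> lp_set p"
  shows "(\<lambda>k. \<Sum>i<N. x i k) \<in> lp_set p"
  using assms(2)
proof (induction N)
  case 0
  then show ?case by (simp add: lp_set_def)
next
  case (Suc N)
  then show ?case
    using lp_set_add[OF assms(1), of "\<lambda>k. \<Sum>i<N. x i k" "x N"] by simp
qed

text \<open>The weights grow with \<open>i\<close>; they are made harmless below by choosing the \<open>i\<close>-th
  summand small enough.\<close>
lemma lp_powsum_sum_le: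
  assumes "0 \<le> p" and "\<And>i. i < N \<Longrightarrow> x i \<in> lp_set p"
  shows "lp_powsum p (\<lambda>k. \<Sum>i<N. x i k) \<le> (\<Sum>i<N. 2 powr (p * Suc i) * lp_powsum p (x i))"
  using assms(2)
proof (induction N arbitrary: x)
  case 0
  then show ?case by (simp add: lp_powsum_def)
next
  case (Suc N)
  have tail: "\<And>i. i < N \<Longrightarrow> x (Suc i) \<in> lp_set p"
    using Suc.prems by simp
  have "lp_powsum p (\<lambda>k. \<Sum>i<Suc N. x i k) = lp_powsum p (\<lambda>k. x 0 k + (\<Sum>i<N. x (Suc i) k))"
    by (simp only: sum.lessThan_Suc_shift)
  also have "\<dots> \<le> 2 powr p * (lp_powsum p (x 0) + lp_powsum p (\<lambda>k. \<Sum>i<N. x (Suc i) k))"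
    using lp_powsum_add_le[OF assms(1) Suc.prems[of 0] lp_set_sum[OF assms(1) tail]] by simp
  also have "\<dots> \<le> 2 powr p * (lp_powsum p (x 0)
      + (\<Sum>i<N. 2 powr (p * Suc i) * lp_powsum p (x (Suc i))))"
    using Suc.IH[OF tail] by (intro mult_left_mono add_left_mono) auto
  also have "\<dots> = (\<Sum>i<Suc N. 2 powr (p * Suc i) * lp_powsum p (x i))"
    by (simp only: sum.lessThan_Suc_shift)
       (simp add: sum_distrib_left powr_add[symmetric] algebra_simps)
  finally show ?case .
qed

lemma lp_powsum_sum_disjoint:
  fixes N :: nat
  assumes "0 \<le> p" and "\<And>i. i < N \<Longrightarrow> x i \<in> lp_set p"
    and "\<And>i j k. i < N \<Longrightarrow> j < N \<Longrightarrow> i \<noteq> j \<Longrightarrow> x i k = 0 \<or> x j k = 0"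
  shows "lp_powsum p (\<lambda>k. \<Sum>i<N. x i k) = (\<Sum>i<N. lp_powsum p (x i))"
  using assms(2,3)
proof (induction N)
  case 0
  then show ?case by (simp add: lp_powsum_def)
next
  case (Suc N)
  have "(\<Sum>i<N. x i k) = 0 \<or> x N k = 0" for k
    using Suc.prems(2)[of _ N k] by (cases "x N k = 0") auto
  then have "lp_powsum p (\<lambda>k. (\<Sum>i<N. x i k) + x N k)
      = lp_powsum p (\<lambda>k. \<Sum>i<N. x i k) + lp_powsum p (x N)"
    using Suc.prems(1) by (intro lp_powsum_add_disjoint lp_set_sum[OF assms(1)]) auto
  then show ?case
    using Suc by simp
qed

lemma lp_set_restrict:
  assumes "x \<in> lp_set p"
  shows "(\<lambda>k. if k \<in> A then x k else 0) \<in> lp_set p"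
    and "(\<lambda>k. if k \<in> A then 0 else x k) \<in> lp_set p"
  using assms unfolding lp_set_def mem_Collect_eq
  by (auto intro: summable_comparison_test[rotated, of "\<lambda>k. cmod (x k) powr p"])

lemma lp_powsum_restrict_split:
  assumes "x \<in> lp_set p"
  shows "lp_powsum p x
    = lp_powsum p (\<lambda>k. if k \<in> A then x k else 0) + lp_powsum p (\<lambda>k. if k \<in> A then 0 else x k)"
proof -
  have "lp_powsum p (\<lambda>k. (if k \<in> A then x k else 0) + (if k \<in> A then 0 else x k))
    = lp_powsum p (\<lambda>k. if k \<in> A then x k else 0) + lp_powsum p (\<lambda>k. if k \<in> A then 0 else x k)"
    by (rule lp_powsum_add_disjoint[OF lp_set_restrict[OF assms]]) simp
  moreover have "(\<lambda>k. (if k \<in> A then x k else 0) + (if k \<in> A then 0 else x k)) = x"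
    by auto
  ultimately show ?thesis
    by simp
qed

lemma lp_powsum_outside_interval:
  assumes x: "x \<in> lp_set p" and "K \<le> K'"
  shows "lp_powsum p (\<lambda>k. if k \<in> {K..<K'} then 0 else x k)
    = (\<Sum>k<K. cmod (x k) powr p) + (lp_powsum p x - (\<Sum>k<K'. cmod (x k) powr p))"
proof -
  have "lp_powsum p (\<lambda>k. if k \<in> {K..<K'} then x k else 0)
      = (\<Sum>k\<in>{K..<K'}. cmod (if k \<in> {K..<K'} then x k else 0) powr p)"
    by (rule lp_set_finite_support(2)) auto
  also have "\<dots> = (\<Sum>k\<in>{K..<K'}. cmod (x k) powr p)"
    by (rule sum.cong) auto
  finally have "lp_powsum p (\<lambda>k. if k \<in> {K..<K'} then x k else 0)
      = (\<Sum>k\<in>{K..<K'}. cmod (x k) powr p)" .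
  moreover have "(\<Sum>k<K'. cmod (x k) powr p)
      = (\<Sum>k<K. cmod (x k) powr p) + (\<Sum>k\<in>{K..<K'}. cmod (x k) powr p)"
    using sum.atLeastLessThan_concat[of 0 K K' "\<lambda>k. cmod (x k) powr p"] assms(2)
    by (simp add: atLeast0LessThan)
  ultimately show ?thesis
    using lp_powsum_restrict_split[OF x, of "{K..<K'}"] by simp
qed

lemma lp_powsum_window_bounds:
  assumes x: "x \<in> lp_set p" and "K \<le> L"
    and head: "(\<Sum>k<K. cmod (x k) powr p) \<le> \<delta>"
    and tail: "lp_powsum p x - (\<Sum>k<L. cmod (x k) powr p) \<le> \<delta>"
  shows "lp_powsum p (\<lambda>k. if k \<in> {K..<L} then 0 else x k) \<le> 2 * \<delta>"
    and "lp_powsum p x - 2 * \<delta> \<le> lp_powsum p (\<lambda>k. if k \<in> {K..<L} then x k else 0)"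
    and "lp_powsum p (\<lambda>k. if k \<in> {K..<L} then x k else 0) \<le> lp_powsum p x"
proof -
  show outside: "lp_powsum p (\<lambda>k. if k \<in> {K..<L} then 0 else x k) \<le> 2 * \<delta>"
    using lp_powsum_outside_interval[OF x \<open>K \<le> L\<close>] head tail by linarith
  note split = lp_powsum_restrict_split[OF x, of "{K..<L}"]
  with outside show "lp_powsum p x - 2 * \<delta> \<le> lp_powsum p (\<lambda>k. if k \<in> {K..<L} then x k else 0)"
    by linarith
  from split show "lp_powsum p (\<lambda>k. if k \<in> {K..<L} then x k else 0) \<le> lp_powsum p x"
    using lp_powsum_nonneg[OF lp_set_restrict(2)[OF x, of "{K..<L}"]] by linarith
qed

section \<open>The gliding hump\<close>

lemma gliding_hump_step:
  fixes v :: "nat \<Rightarrow> nat \<Rightarrow> complex"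
  assumes "0 < p" and "\<And>j. v j \<in> lp_set p" and "\<And>k. (\<lambda>j. v j k) \<longlonglongrightarrow> 0" and "0 < \<delta>"
  obtains m K' where "m0 \<le> m" and "K \<le> K'" and "(\<Sum>k<K. cmod (v m k) powr p) \<le> \<delta>"
    and "lp_powsum p (v m) - (\<Sum>k<K'. cmod (v m k) powr p) \<le> \<delta>"
proof -
  have "(\<lambda>j. cmod (v j k) powr p) \<longlonglongrightarrow> 0" for k
    using assms(1,3) tendsto_norm_zero by (intro tendsto_zero_powrI) auto
  then have "(\<lambda>j. \<Sum>k<K. cmod (v j k) powr p) \<longlonglongrightarrow> (\<Sum>k<K. 0)"
    by (intro tendsto_sum)
  then have "\<forall>\<^sub>F j in sequentially. (\<Sum>k<K. cmod (v j k) powr p) < \<delta>"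
    using assms(4) by (simp add: order_tendstoD(2))
  then obtain m where m: "m0 \<le> m" "(\<Sum>k<K. cmod (v m k) powr p) < \<delta>"
    unfolding eventually_sequentially using max.cobounded1 max.cobounded2 by blast
  have "(\<lambda>n. \<Sum>k<n. cmod (v m k) powr p) \<longlonglongrightarrow> lp_powsum p (v m)"
    using assms(2) unfolding lp_powsum_def lp_set_def by (intro summable_LIMSEQ) auto
  then have "\<forall>\<^sub>F n in sequentially. lp_powsum p (v m) - \<delta> < (\<Sum>k<n. cmod (v m k) powr p)"
    using assms(4) by (intro order_tendstoD(1)) auto
  then obtain K' where "K \<le> K'" "lp_powsum p (v m) - \<delta> < (\<Sum>k<K'. cmod (v m k) powr p)"
    unfolding eventually_sequentially using max.cobounded1 max.cobounded2 by blast
  with m show thesis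
    by (intro that[of m K']) auto
qed

lemma gliding_hump_windows:
  fixes v :: "nat \<Rightarrow> nat \<Rightarrow> complex" and \<delta> :: "nat \<Rightarrow> real"
  assumes "0 < p" and "\<And>j. v j \<in> lp_set p" and "\<And>k. (\<lambda>j. v j k) \<longlonglongrightarrow> 0"
    and "\<And>i. 0 < \<delta> i"
  obtains m K L where "strict_mono m" and "\<And>i. K i \<le> L i" and "\<And>i j. i < j \<Longrightarrow> L i \<le> K j"
    and "\<And>i. (\<Sum>k<K i. cmod (v (m i) k) powr p) \<le> \<delta> i"
    and "\<And>i. lp_powsum p (v (m i)) - (\<Sum>k<L i. cmod (v (m i) k) powr p) \<le> \<delta> i"
proof -
  define P where "P i r \<longleftrightarrow> (case r of (m, K, L) \<Rightarrow> K \<le> L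
      \<and> (\<Sum>k<K. cmod (v m k) powr p) \<le> \<delta> i
      \<and> lp_powsum p (v m) - (\<Sum>k<L. cmod (v m k) powr p) \<le> \<delta> i)" for i r
  define Q where "Q i r r' \<longleftrightarrow> (case (r, r') of ((m, K, L), (m', K', L')) \<Rightarrow> m < m' \<and> L \<le> K')"
    for i :: nat and r r' :: "nat \<times> nat \<times> nat"
  have "\<exists>r. P 0 r"
  proof -
    obtain m L where "0 \<le> m" "0 \<le> L" "(\<Sum>k<0. cmod (v m k) powr p) \<le> \<delta> 0"
      "lp_powsum p (v m) - (\<Sum>k<L. cmod (v m k) powr p) \<le> \<delta> 0"
      by (rule gliding_hump_step[OF assms(1-3) assms(4)])
    then show ?thesis
      by (intro exI[of _ "(m, 0, L)"]) (simp add: P_def)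
  qed
  moreover have "\<exists>r'. P (Suc i) r' \<and> Q i r r'" for i r
  proof -
    obtain m K L where r: "r = (m, K, L)"
      by (cases r) auto
    obtain m' L' where "Suc m \<le> m'" "L \<le> L'" "(\<Sum>k<L. cmod (v m' k) powr p) \<le> \<delta> (Suc i)"
      "lp_powsum p (v m') - (\<Sum>k<L'. cmod (v m' k) powr p) \<le> \<delta> (Suc i)"
      by (rule gliding_hump_step[OF assms(1-3) assms(4)])
    then show ?thesis
      by (intro exI[of _ "(m', L, L')"]) (simp add: P_def Q_def r)
  qed
  ultimately obtain f where f: "\<And>i. P i (f i) \<and> Q i (f i) (f (Suc i))"
    using dependent_nat_choice[of P Q] by blast
  define m where "m i = fst (f i)" for i
  define K where "K i = fst (snd (f i))" for i
  define L where "L i = snd (snd (f i))" for i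
  have P: "K i \<le> L i" "(\<Sum>k<K i. cmod (v (m i) k) powr p) \<le> \<delta> i"
    "lp_powsum p (v (m i)) - (\<Sum>k<L i. cmod (v (m i) k) powr p) \<le> \<delta> i" for i
    using f[of i] by (auto simp: P_def m_def K_def L_def split: prod.splits)
  have Q: "m i < m (Suc i)" "L i \<le> K (Suc i)" for i
    using f[of i] by (auto simp: Q_def m_def K_def L_def split: prod.splits)
  have "incseq L"
    using Q(2) P(1) by (intro incseq_SucI) (meson order_trans)
  have "L i \<le> K j" if "i < j" for i j
  proof -
    obtain j' where j': "j = Suc j'" "i \<le> j'"
      using \<open>i < j\<close> by (cases j) auto
    then have "L i \<le> L j'"
      using \<open>incseq L\<close> by (simp add: incseqD)
    then show ?thesis
      using Q(2)[of j'] j'(1) by simp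
  qed
  then show thesis
    using that[of m K L] P Q(1) by (simp add: strict_mono_Suc_iff)
qed

lemma lp_powsum_sum_almost_disjoint:
  fixes w e :: "nat \<Rightarrow> nat \<Rightarrow> complex" and N :: nat
  assumes p: "0 \<le> p" and w: "\<And>i. w i \<in> lp_set p" and e: "\<And>i. e i \<in> lp_set p"
    and disjoint: "\<And>i j k. i \<noteq> j \<Longrightarrow> w i k = 0 \<or> w j k = 0"
    and lower: "\<And>i. a \<le> lp_powsum p (w i)" and upper: "\<And>i. lp_powsum p (w i) \<le> B"
    and small: "\<And>i. 2 powr (p * Suc i) * lp_powsum p (e i) \<le> \<eta>"
  shows "real N * a \<le> 2 powr p * (lp_powsum p (\<lambda>k. \<Sum>i<N. w i k + e i k) + real N * \<eta>)"
    and "lp_powsum p (\<lambda>k. \<Sum>i<N. w i k + e i k) \<le> 2 powr p * (real N * B + real N * \<eta>)"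
proof -
  define W where "W = (\<lambda>k. \<Sum>i<N. w i k)"
  define E where "E = (\<lambda>k. \<Sum>i<N. e i k)"
  have W_lp: "W \<in> lp_set p" and E_lp: "E \<in> lp_set p"
    unfolding W_def E_def using p w e by (auto intro: lp_set_sum)
  have sum_eq: "(\<lambda>k. \<Sum>i<N. w i k + e i k) = (\<lambda>k. W k + E k)"
    by (simp add: W_def E_def sum.distrib)
  have "lp_powsum p W = (\<Sum>i<N. lp_powsum p (w i))"
    unfolding W_def using p w disjoint by (intro lp_powsum_sum_disjoint) auto
  then have W_lower: "real N * a \<le> lp_powsum p W" and W_upper: "lp_powsum p W \<le> real N * B"
    using sum_mono[of "{..<N}" "\<lambda>_. a" "\<lambda>i. lp_powsum p (w i)"]
      sum_mono[of "{..<N}" "\<lambda>i. lp_powsum p (w i)" "\<lambda>_. B"] lower upper by auto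
  have "lp_powsum p E \<le> (\<Sum>i<N. 2 powr (p * Suc i) * lp_powsum p (e i))"
    unfolding E_def using p e by (intro lp_powsum_sum_le) auto
  also have "\<dots> \<le> (\<Sum>i<N. \<eta>)"
    using small by (rule sum_mono)
  finally have E_small: "lp_powsum p E \<le> real N * \<eta>"
    by simp
  have "lp_powsum p W \<le> 2 powr p * (lp_powsum p (\<lambda>k. W k + E k) + lp_powsum p E)"
    using lp_powsum_add_le[OF p lp_set_add[OF p W_lp E_lp], of "\<lambda>k. - E k"] E_lp by simp
  then show "real N * a \<le> 2 powr p * (lp_powsum p (\<lambda>k. \<Sum>i<N. w i k + e i k) + real N * \<eta>)"
    unfolding sum_eq using W_lower E_small by (smt (verit) mult_left_mono powr_ge_zero)
  have "lp_powsum p (\<lambda>k. W k + E k) \<le> 2 powr p * (lp_powsum p W + lp_powsum p E)"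
    by (rule lp_powsum_add_le[OF p W_lp E_lp])
  then show "lp_powsum p (\<lambda>k. \<Sum>i<N. w i k + e i k) \<le> 2 powr p * (real N * B + real N * \<eta>)"
    unfolding sum_eq using W_upper E_small by (smt (verit) mult_left_mono powr_ge_zero)
qed

lemma gliding_hump_decomposition:
  fixes v :: "nat \<Rightarrow> nat \<Rightarrow> complex"
  assumes p: "0 < p" and v: "\<And>j. v j \<in> lp_set p" and null: "\<And>k. (\<lambda>j. v j k) \<longlonglongrightarrow> 0"
    and lower: "\<And>j. c \<le> lp_powsum p (v j)" and upper: "\<And>j. lp_powsum p (v j) \<le> B"
    and "0 < c" and "0 < \<eta>"
  obtains m w e where "strict_mono m" and "\<And>i. v (m i) = (\<lambda>k. w i k + e i k)"
    and "\<And>i. w i \<in> lp_set p" and "\<And>i. e i \<in> lp_set p"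
    and "\<And>i j k. i \<noteq> j \<Longrightarrow> w i k = 0 \<or> w j k = 0"
    and "\<And>i. c / 2 \<le> lp_powsum p (w i)" and "\<And>i. lp_powsum p (w i) \<le> B"
    and "\<And>i. 2 powr (p * Suc i) * lp_powsum p (e i) \<le> \<eta>"
proof -
  define \<delta> where "\<delta> i = min (c / 4) (\<eta> / (2 * 2 powr (p * Suc i)))" for i :: nat
  have \<delta>_pos: "0 < \<delta> i" for i
    using \<open>0 < c\<close> \<open>0 < \<eta>\<close> by (simp add: \<delta>_def)
  obtain m K L where "strict_mono m" and KL: "\<And>i. K i \<le> L i"
    and apart: "\<And>i j. i < j \<Longrightarrow> L i \<le> K j"
    and head: "\<And>i. (\<Sum>k<K i. cmod (v (m i) k) powr p) \<le> \<delta> i"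
    and tail: "\<And>i. lp_powsum p (v (m i)) - (\<Sum>k<L i. cmod (v (m i) k) powr p) \<le> \<delta> i"
    using gliding_hump_windows[where \<delta> = \<delta>, OF p v null \<delta>_pos] by blast
  define w where "w i = (\<lambda>k. if k \<in> {K i..<L i} then v (m i) k else 0)" for i
  define e where "e i = (\<lambda>k. if k \<in> {K i..<L i} then 0 else v (m i) k)" for i
  have "v (m i) = (\<lambda>k. w i k + e i k)" for i
    by (auto simp: w_def e_def)
  moreover have "w i \<in> lp_set p" and "e i \<in> lp_set p" for i
    unfolding w_def e_def by (intro lp_set_restrict v)+
  moreover have "w i k = 0 \<or> w j k = 0" if "i \<noteq> j" for i j k
    using apart[of i j] apart[of j i] that by (cases "i < j") (auto simp: w_def)
  moreover have e_small: "lp_powsum p (e i) \<le> 2 * \<delta> i"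
    and w_window: "lp_powsum p (v (m i)) - 2 * \<delta> i \<le> lp_powsum p (w i)"
      "lp_powsum p (w i) \<le> lp_powsum p (v (m i))" for i
    unfolding w_def e_def using lp_powsum_window_bounds[OF v KL head tail] by blast+
  moreover have "c / 2 \<le> lp_powsum p (w i)" and "lp_powsum p (w i) \<le> B" for i
    using lower[of "m i"] upper[of "m i"] w_window[of i] min.cobounded1[of "c / 4"]
    unfolding \<delta>_def by linarith+
  moreover have "2 powr (p * Suc i) * lp_powsum p (e i) \<le> \<eta>" for i
  proof -
    have "2 powr (p * Suc i) * lp_powsum p (e i) \<le> 2 powr (p * Suc i) * (2 * \<delta> i)"
      using e_small[of i] by (intro mult_left_mono) auto
    also have "\<dots> \<le> 2 powr (p * Suc i) * (2 * (\<eta> / (2 * 2 powr (p * Suc i))))"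
      by (intro mult_left_mono) (auto simp: \<delta>_def)
    finally show ?thesis
      by simp
  qed
  ultimately show thesis
    using that[OF \<open>strict_mono m\<close>] by blast
qed

lemma gliding_hump:
  fixes v :: "nat \<Rightarrow> nat \<Rightarrow> complex"
  assumes p: "0 < p" and v: "\<And>j. v j \<in> lp_set p" and null: "\<And>k. (\<lambda>j. v j k) \<longlonglongrightarrow> 0"
    and lower: "\<And>j. c \<le> lp_powsum p (v j)" and upper: "\<And>j. lp_powsum p (v j) \<le> B"
    and "0 < c"
  obtains m where "strict_mono m"
    and "\<And>N. real N * c / (4 * 2 powr p) \<le> lp_powsum p (\<lambda>k. \<Sum>i<N. v (m i) k)"
    and "\<And>N. lp_powsum p (\<lambda>k. \<Sum>i<N. v (m i) k) \<le> 2 powr p * real N * (B + c)"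
proof -
  define t where "t = 2 powr p"
  have "1 \<le> t"
    using p by (simp add: t_def ge_one_powr_ge_zero)
  define \<eta> where "\<eta> = c / (4 * t)"
  have "0 < \<eta>" and "\<eta> \<le> c" and \<eta>: "t * \<eta> = c / 4"
    using \<open>0 < c\<close> \<open>1 \<le> t\<close> by (auto simp: \<eta>_def field_simps)
  obtain m w e where "strict_mono m" and v_m: "\<And>i. v (m i) = (\<lambda>k. w i k + e i k)"
    and w: "\<And>i. w i \<in> lp_set p" and e: "\<And>i. e i \<in> lp_set p"
    and w_disjoint: "\<And>i j k. i \<noteq> j \<Longrightarrow> w i k = 0 \<or> w j k = 0"
    and w_lower: "\<And>i. c / 2 \<le> lp_powsum p (w i)" and w_upper: "\<And>i. lp_powsum p (w i) \<le> B"
    and e_small: "\<And>i. 2 powr (p * Suc i) * lp_powsum p (e i) \<le> \<eta>"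
    using gliding_hump_decomposition[OF p v null lower upper \<open>0 < c\<close> \<open>0 < \<eta>\<close>] by blast
  note bounds = lp_powsum_sum_almost_disjoint[where w = w and e = e,
      OF less_imp_le[OF p] w e w_disjoint w_lower w_upper e_small, folded t_def]
  have sum_eq: "(\<lambda>k. \<Sum>i<N. v (m i) k) = (\<lambda>k. \<Sum>i<N. w i k + e i k)" for N
    by (simp add: v_m)
  have "real N * c / (4 * t) \<le> lp_powsum p (\<lambda>k. \<Sum>i<N. v (m i) k)" for N
  proof -
    have "real N * (c / 2) \<le> t * lp_powsum p (\<lambda>k. \<Sum>i<N. v (m i) k) + real N * (t * \<eta>)"
      using bounds(1)[of N] by (simp add: sum_eq algebra_simps)
    then have "real N * c / 4 \<le> t * lp_powsum p (\<lambda>k. \<Sum>i<N. v (m i) k)"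
      unfolding \<eta> by linarith
    then show ?thesis
      using \<open>1 \<le> t\<close> by (simp add: field_simps)
  qed
  moreover have "lp_powsum p (\<lambda>k. \<Sum>i<N. v (m i) k) \<le> t * real N * (B + c)" for N
  proof -
    have "real N * \<eta> \<le> real N * c"
      using \<open>\<eta> \<le> c\<close> by (simp add: mult_left_mono)
    then have "t * (real N * B + real N * \<eta>) \<le> t * (real N * (B + c))"
      using \<open>1 \<le> t\<close> by (intro mult_left_mono) (auto simp: distrib_left)
    then show ?thesis
      using bounds(2)[of N] by (simp add: sum_eq mult.assoc)
  qed
  ultimately show thesis
    by (rule that[OF \<open>strict_mono m\<close>, unfolded t_def[symmetric]])
qed

section \<open>Isomorphic embeddings of l^q into l^p\<close>

lemma bounded_coordinates_convergent_subseq: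
  fixes u :: "nat \<Rightarrow> nat \<Rightarrow> complex"
  assumes "\<And>n k. norm (u n k) \<le> R"
  obtains \<sigma> where "strict_mono \<sigma>" and "\<And>k. convergent (\<lambda>n. u (\<sigma> n) k)"
proof -
  have "compact (PiE UNIV (\<lambda>k::nat. cball (0::complex) R))"
    using compactin_PiE[of "\<lambda>_. euclidean" UNIV "\<lambda>k. cball (0::complex) R"]
    by (metis compact_cball compactin_euclidean_iff euclidean_product_topology)
  moreover have "u n \<in> PiE UNIV (\<lambda>k. cball 0 R)" for n
    using assms by (auto simp: PiE_def)
  ultimately obtain l \<sigma> where "strict_mono \<sigma>" and lim: "(u \<circ> \<sigma>) \<longlonglongrightarrow> l"
    by (meson compact_imp_seq_compact seq_compactE)
  have cont: "isCont (\<lambda>x. x k) l" for k :: nat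
  proof -
    have "continuous_on UNIV (\<lambda>x::nat \<Rightarrow> complex. x k)"
      by simp
    then show ?thesis
      using continuous_on_eq_continuous_at open_UNIV by blast
  qed
  have "(\<lambda>n. u (\<sigma> n) k) \<longlonglongrightarrow> l k" for k
    using isCont_tendsto_compose[OF cont lim] by (simp add: o_def)
  with \<open>strict_mono \<sigma>\<close> show thesis
    using that convergent_def by blast
qed

lemma nat_powr_between_linear_imp_eq_1:
  fixes s a b :: real
  assumes "0 < a"
    and bounds: "\<And>N::nat. 1 \<le> N \<Longrightarrow> a * real N \<le> real N powr s \<and> real N powr s \<le> b * real N"
  shows "s = 1"
proof (rule ccontr)
  assume "s \<noteq> 1"
  define r where "r = - \<bar>s - 1\<bar>"
  have "r < 0"
    using \<open>s \<noteq> 1\<close> by (simp add: r_def)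
  have quotient: "a \<le> real N powr (s - 1) \<and> real N powr (s - 1) \<le> b" if "1 \<le> N" for N :: nat
    using bounds[OF that] that by (simp add: powr_diff field_simps)
  then have "0 < b"
    using \<open>0 < a\<close> by (meson less_le_trans order.refl)
  have "min a (inverse b) \<le> real N powr r" if "1 \<le> N" for N :: nat
  proof (cases "s < 1")
    case True
    then show ?thesis
      using quotient[OF that] by (auto simp: r_def intro: min.coboundedI1)
  next
    case False
    then have "real N powr r = inverse (real N powr (s - 1))"
      by (simp add: r_def powr_minus[symmetric])
    then show ?thesis
      using quotient[OF that] \<open>0 < a\<close> that by (auto intro!: min.coboundedI2 le_imp_inverse_le)
  qed
  moreover have "(\<lambda>N. real N powr r) \<longlonglongrightarrow> 0"
    by (rule tendsto_neg_powr[OF \<open>r < 0\<close> filterlim_real_sequentially])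
  then have "\<forall>\<^sub>F N in sequentially. real N powr r < min a (inverse b)"
    using \<open>0 < a\<close> \<open>0 < b\<close> by (intro order_tendstoD(2)) auto
  then obtain N :: nat where "1 \<le> N" "real N powr r < min a (inverse b)"
    unfolding eventually_sequentially using max.cobounded1 max.cobounded2 by blast
  ultimately show False
    by (meson not_le)
qed

definition unit_seq :: "nat \<Rightarrow> nat \<Rightarrow> complex" where
  "unit_seq n = (\<lambda>k. if k = n then 1 else 0)"

lemma unit_seq_lp: "unit_seq n \<in> lp_set p" and lp_powsum_unit_seq: "lp_powsum p (unit_seq n) = 1"
  using lp_set_finite_support[of "{n}" "unit_seq n" p] by (auto simp: unit_seq_def)

lemma unit_seq_diff_lp: "(\<lambda>k. unit_seq a k - unit_seq b k) \<in> lp_set p"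
  and lp_powsum_unit_seq_diff: "a \<noteq> b \<Longrightarrow> lp_powsum p (\<lambda>k. unit_seq a k - unit_seq b k) = 2"
  using lp_set_finite_support[of "{a, b}" "\<lambda>k. unit_seq a k - unit_seq b k" p]
  by (auto simp: unit_seq_def)

locale lp_embedding =
  fixes p q M C :: real and J :: "(nat \<Rightarrow> complex) \<Rightarrow> nat \<Rightarrow> complex"
  assumes p_pos: "0 < p" and q_pos: "0 < q"
    and maps_into: "\<And>x. x \<in> lp_set q \<Longrightarrow> J x \<in> lp_set p"
    and additive: "\<And>x y. x \<in> lp_set q \<Longrightarrow> y \<in> lp_set q \<Longrightarrow>
      J (\<lambda>k. x k + y k) = (\<lambda>k. J x k + J y k)"
    and bounded:
      "\<And>x. x \<in> lp_set q \<Longrightarrow> lp_powsum p (J x) powr (1 / p) \<le> M * lp_powsum q x powr (1 / q)"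
    and bounded_below:
      "\<And>x. x \<in> lp_set q \<Longrightarrow> lp_powsum q x powr (1 / q) \<le> C * lp_powsum p (J x) powr (1 / p)"
begin

lemma J_zero: "J (\<lambda>k. 0) = (\<lambda>k. 0)"
proof -
  have "(\<lambda>k. 0::complex) \<in> lp_set q"
    by (simp add: lp_set_def)
  from additive[OF this this] show ?thesis
    by (metis add_cancel_left_left)
qed

lemma J_diff:
  assumes "x \<in> lp_set q" and "y \<in> lp_set q"
  shows "J (\<lambda>k. x k - y k) = (\<lambda>k. J x k - J y k)"
proof -
  have "(\<lambda>k. x k - y k) \<in> lp_set q"
    using lp_set_add[of q x "\<lambda>k. - y k"] q_pos assms by simp
  from additive[OF this assms(2)] show ?thesis
    by (simp add: eq_diff_eq)
qed

lemma J_sum: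
  fixes N :: nat
  assumes "\<And>i. i < N \<Longrightarrow> x i \<in> lp_set q"
  shows "J (\<lambda>k. \<Sum>i<N. x i k) = (\<lambda>k. \<Sum>i<N. J (x i) k)"
  using assms
proof (induction N)
  case 0
  then show ?case by (simp add: J_zero)
next
  case (Suc N)
  have "(\<lambda>k. \<Sum>i<N. x i k) \<in> lp_set q"
    using Suc.prems q_pos by (intro lp_set_sum) auto
  then show ?case
    using Suc additive[of "\<lambda>k. \<Sum>i<N. x i k" "x N"] by simp
qed

lemma bound_constants_pos: "0 < M" "0 < C"
proof -
  let ?y = "lp_powsum p (J (unit_seq 0)) powr (1 / p)"
  have "1 \<le> C * ?y" and "?y \<le> M"
    using bounded_below[OF unit_seq_lp] bounded[OF unit_seq_lp] by (simp_all add: lp_powsum_unit_seq)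
  moreover have "0 < ?y"
    using \<open>1 \<le> C * ?y\<close> by (cases "?y = 0") auto
  ultimately show "0 < M" "0 < C"
    using zero_less_mult_pos2[of C ?y] by linarith+
qed

lemma lp_powsum_J_le:
  assumes "x \<in> lp_set q"
  shows "lp_powsum p (J x) \<le> M powr p * lp_powsum q x powr (p / q)"
proof -
  have "lp_powsum p (J x) = (lp_powsum p (J x) powr (1 / p)) powr p"
    using p_pos lp_powsum_nonneg[OF maps_into[OF assms]] by (simp add: powr_powr)
  also have "\<dots> \<le> (M * lp_powsum q x powr (1 / q)) powr p"
    using p_pos bounded[OF assms] by (intro powr_mono2) auto
  also have "\<dots> = M powr p * lp_powsum q x powr (p / q)"
    using bound_constants_pos by (simp add: powr_mult powr_powr)
  finally show ?thesis .
qed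

lemma lp_powsum_J_ge:
  assumes "x \<in> lp_set q"
  shows "lp_powsum q x powr (p / q) \<le> C powr p * lp_powsum p (J x)"
proof -
  have "lp_powsum q x powr (p / q) = (lp_powsum q x powr (1 / q)) powr p"
    by (simp add: powr_powr)
  also have "\<dots> \<le> (C * lp_powsum p (J x) powr (1 / p)) powr p"
    using p_pos bounded_below[OF assms] by (intro powr_mono2) auto
  also have "\<dots> = C powr p * lp_powsum p (J x)"
    using p_pos bound_constants_pos lp_powsum_nonneg[OF maps_into[OF assms]]
    by (simp add: powr_mult powr_powr)
  finally show ?thesis .
qed

lemma norm_J_unit_seq_le: "cmod (J (unit_seq n) k) \<le> M"
proof -
  have "(\<Sum>i\<in>{k}. cmod (J (unit_seq n) i) powr p) \<le> lp_powsum p (J (unit_seq n))"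
    using maps_into[OF unit_seq_lp] unfolding lp_powsum_def lp_set_def
    by (intro sum_le_suminf) auto
  also have "\<dots> \<le> M powr p"
    using lp_powsum_J_le[OF unit_seq_lp] by (simp add: lp_powsum_unit_seq)
  finally have "cmod (J (unit_seq n) k) powr p \<le> M powr p"
    by simp
  then show ?thesis
    using p_pos bound_constants_pos powr_less_mono2[of p M "cmod (J (unit_seq n) k)"] by linarith
qed

lemma null_images_of_unit_seq_differences:
  obtains d where "\<And>j. d j \<in> lp_set q" and "\<And>j. lp_powsum q (d j) = 2"
    and "\<And>i j k. i \<noteq> j \<Longrightarrow> d i k = 0 \<or> d j k = 0"
    and "\<And>k. (\<lambda>j. J (d j) k) \<longlonglongrightarrow> 0"
proof -
  define u where "u n = J (unit_seq n)" for n
  obtain \<sigma> where "strict_mono \<sigma>" and conv: "\<And>k. convergent (\<lambda>n. u (\<sigma> n) k)"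
    using bounded_coordinates_convergent_subseq[of u M] norm_J_unit_seq_le by (auto simp: u_def)
  define d where "d j = (\<lambda>k. unit_seq (\<sigma> (2 * j)) k - unit_seq (\<sigma> (2 * j + 1)) k)" for j
  have "d j \<in> lp_set q" and "lp_powsum q (d j) = 2" for j
    using strict_mono_eq[OF \<open>strict_mono \<sigma>\<close>, of "2 * j" "2 * j + 1"]
    by (simp_all add: d_def unit_seq_diff_lp lp_powsum_unit_seq_diff)
  moreover have "d i k = 0 \<or> d j k = 0" if "i \<noteq> j" for i j k
    using that strict_mono_eq[OF \<open>strict_mono \<sigma>\<close>] by (auto simp: d_def unit_seq_def)
  moreover have "(\<lambda>j. J (d j) k) \<longlonglongrightarrow> 0" for k
  proof -
    obtain l where l: "(\<lambda>n. u (\<sigma> n) k) \<longlonglongrightarrow> l"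
      using conv[of k] by (auto simp: convergent_def)
    have "(\<lambda>j. u (\<sigma> (2 * j)) k - u (\<sigma> (2 * j + 1)) k) \<longlonglongrightarrow> l - l"
      using LIMSEQ_subseq_LIMSEQ[OF l, of "\<lambda>j. 2 * j"] LIMSEQ_subseq_LIMSEQ[OF l, of "\<lambda>j. 2 * j + 1"]
      by (intro tendsto_diff) (auto simp: strict_mono_def o_def)
    then show ?thesis
      by (simp add: d_def u_def J_diff unit_seq_lp)
  qed
  ultimately show thesis
    using that by blast
qed

lemma linear_growth_sequence:
  obtains X a b where "\<And>N. X N \<in> lp_set q" and "\<And>N. lp_powsum q (X N) = 2 * real N"
    and "0 < a" and "\<And>N. a * real N \<le> lp_powsum p (J (X N))"
    and "\<And>N. lp_powsum p (J (X N)) \<le> b * real N"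
proof -
  obtain d where d: "\<And>j. d j \<in> lp_set q" and lp_powsum_d: "\<And>j. lp_powsum q (d j) = 2"
    and d_disjoint: "\<And>i j k. i \<noteq> j \<Longrightarrow> d i k = 0 \<or> d j k = 0"
    and v_null: "\<And>k. (\<lambda>j. J (d j) k) \<longlonglongrightarrow> 0"
    using null_images_of_unit_seq_differences by blast
  define c where "c = 2 powr (p / q) / C powr p"
  define B where "B = M powr p * 2 powr (p / q)"
  have "0 < c"
    using bound_constants_pos by (simp add: c_def)
  have v_lower: "c \<le> lp_powsum p (J (d j))" for j
    using lp_powsum_J_ge[OF d, of j] bound_constants_pos
    by (simp add: c_def lp_powsum_d divide_le_eq mult.commute)
  have v_upper: "lp_powsum p (J (d j)) \<le> B" for j
    using lp_powsum_J_le[OF d, of j] by (simp add: B_def lp_powsum_d)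
  obtain m where "strict_mono m"
    and lower: "\<And>N. real N * c / (4 * 2 powr p) \<le> lp_powsum p (\<lambda>k. \<Sum>i<N. J (d (m i)) k)"
    and upper: "\<And>N. lp_powsum p (\<lambda>k. \<Sum>i<N. J (d (m i)) k) \<le> 2 powr p * real N * (B + c)"
    using gliding_hump[OF p_pos maps_into[OF d] v_null v_lower v_upper \<open>0 < c\<close>] by blast
  define X where "X N = (\<lambda>k. \<Sum>i<N. d (m i) k)" for N
  have X: "X N \<in> lp_set q" for N
    unfolding X_def using q_pos d by (intro lp_set_sum) auto
  have J_X: "J (X N) = (\<lambda>k. \<Sum>i<N. J (d (m i)) k)" for N
    unfolding X_def using d by (intro J_sum)
  have "lp_powsum q (X N) = 2 * real N" for N
    unfolding X_def using q_pos d d_disjoint strict_mono_eq[OF \<open>strict_mono m\<close>]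
    by (subst lp_powsum_sum_disjoint) (auto simp: lp_powsum_d)
  moreover have "0 < c / (4 * 2 powr p)"
    using \<open>0 < c\<close> by simp
  ultimately show thesis
    using that[of X "c / (4 * 2 powr p)" "2 powr p * (B + c)"] X lower upper
    by (simp add: J_X mult.commute mult.left_commute)
qed

theorem exponents_eq: "p = q"
proof -
  obtain X a b where X: "\<And>N. X N \<in> lp_set q"
    and lp_powsum_X: "\<And>N. lp_powsum q (X N) = 2 * real N" and "0 < a"
    and lower: "\<And>N. a * real N \<le> lp_powsum p (J (X N))"
    and upper: "\<And>N. lp_powsum p (J (X N)) \<le> b * real N"
    using linear_growth_sequence by blast
  define s where "s = p / q"
  have "a / (M powr p * 2 powr s) * real N \<le> real N powr s
    \<and> real N powr s \<le> C powr p * b / 2 powr s * real N" for N :: nat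
  proof -
    have power: "lp_powsum q (X N) powr s = 2 powr s * real N powr s"
      by (simp add: lp_powsum_X powr_mult)
    have "a * real N \<le> M powr p * (2 powr s * real N powr s)"
      using order_trans[OF lower[of N] lp_powsum_J_le[OF X]] power by (simp add: s_def)
    moreover have "2 powr s * real N powr s \<le> C powr p * (b * real N)"
      using order_trans[OF lp_powsum_J_ge[OF X] mult_left_mono[OF upper[of N]]] power by (simp add: s_def)
    ultimately show ?thesis
      using bound_constants_pos by (simp add: field_simps)
  qed
  then have "s = 1"
    by (rule nat_powr_between_linear_imp_eq_1[rotated]) (use \<open>0 < a\<close> bound_constants_pos in simp)
  then show "p = q"
    using q_pos by (simp add: s_def)
qed

end

lemma complex_banach_norm_zero: "complex_banach sc nm \<Longrightarrow> nm 0 = 0"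
  by (simp add: complex_banach_def)

lemma inv_bop_dsum_lp_space_exponents_eq:
  fixes sc :: "complex \<Rightarrow> 'y::ab_group_add \<Rightarrow> 'y"
  assumes "0 < p" and "0 < q" and "nm 0 = 0"
    and "inv_bop (dsum (lp_space q) (type_space sc nm)) (lp_space p) E"
  shows "p = q"
proof -
  let ?A = "dsum (lp_space q) (type_space sc nm)"
  obtain F where E: "bop ?A (lp_space p) E" and F: "bop (lp_space p) ?A F"
    and F_E: "\<And>x. x \<in> carrier ?A \<Longrightarrow> F (E x) = x"
    using assms(4) unfolding inv_bop_def by blast
  obtain M where M: "\<And>x. x \<in> carrier ?A \<Longrightarrow> vnorm (lp_space p) (E x) \<le> M * vnorm ?A x"
    using E unfolding bop_def by blast
  obtain C where C: "\<And>y. y \<in> lp_set p \<Longrightarrow> vnorm ?A (F y) \<le> C * vnorm (lp_space p) y"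
    using F unfolding bop_def carrier_lp_space by blast
  have carrier: "(y, 0) \<in> carrier ?A \<longleftrightarrow> y \<in> lp_set q" for y
    by (simp add: dsum_def type_space_def)
  have norm: "vnorm ?A (y, 0) = lp_powsum q y powr (1 / q)" for y
    by (simp add: dsum_def type_space_def assms(3))
  have E_into: "E (y, 0) \<in> lp_set p" if "y \<in> lp_set q" for y
    using E that carrier unfolding bop_def by auto
  interpret lp_embedding p q M C "\<lambda>y. E (y, 0)"
  proof
    fix x y
    assume x: "x \<in> lp_set q" and y: "y \<in> lp_set q"
    have "vadd ?A (x, 0) (y, 0) = ((\<lambda>k. x k + y k), 0)"
      by (simp add: dsum_def type_space_def)
    moreover have "E (vadd ?A (x, 0) (y, 0)) = vadd (lp_space p) (E (x, 0)) (E (y, 0))"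
      using E x y carrier unfolding bop_def by blast
    ultimately show "E ((\<lambda>k. x k + y k), 0) = (\<lambda>k. E (x, 0) k + E (y, 0) k)"
      by simp
  next
    fix x
    assume x: "x \<in> lp_set q"
    show "E (x, 0) \<in> lp_set p"
      using E_into[OF x] .
    show "lp_powsum p (E (x, 0)) powr (1 / p) \<le> M * lp_powsum q x powr (1 / q)"
      using M[of "(x, 0)"] x carrier norm by simp
    show "lp_powsum q x powr (1 / q) \<le> C * lp_powsum p (E (x, 0)) powr (1 / p)"
      using C[OF E_into[OF x]] F_E[of "(x, 0)"] x carrier norm by simp
  qed (use assms in auto)
  show ?thesis
    by (rule exponents_eq)
qed

theorem proposition4p3:
  fixes p q :: real
    and T S :: "(nat \<Rightarrow> complex) \<Rightarrow> (nat \<Rightarrow> complex)"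
  assumes "1 \<le> p" and "1 \<le> q" and "p \<noteq> q"
    and "bop (lp_space p) (lp_space p) T"
    and "bop (lp_space q) (lp_space q) S"
  shows "(\<not> (\<exists>(scY :: complex \<Rightarrow> 'y::ab_group_add \<Rightarrow> 'y) nmY E F.
             complex_banach scY nmY \<and>
             inv_bop (dsum (lp_space q) (type_space scY nmY)) (lp_space p) E \<and>
             inv_bop (lp_space p) (dsum (lp_space q) (type_space scY nmY)) F \<and>
             (\<forall>x\<in>carrier (lp_space p). T x = E ((\<lambda>(y, y'). (S y, y')) (F x)))) \<and>
         \<not> (\<exists>(scX :: complex \<Rightarrow> 'x::ab_group_add \<Rightarrow> 'x) nmX E F.
             complex_banach scX nmX \<and>
             inv_bop (lp_space q) (dsum (lp_space p) (type_space scX nmX)) E \<and>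
             inv_bop (dsum (lp_space p) (type_space scX nmX)) (lp_space q) F \<and>
             (\<forall>x\<in>carrier (lp_space p). \<forall>x'. (T x, x') = E (S (F (x, x'))))))"
proof -
  \<comment> \<open>Only the invertibility of \<open>E\<close> (resp. \<open>F\<close>) is used.\<close>
  have "0 < p" and "0 < q"
    using assms(1,2) by linarith+
  have "\<not> inv_bop (dsum (lp_space q) (type_space scY nmY)) (lp_space p) E"
    if "complex_banach scY nmY" for scY :: "complex \<Rightarrow> 'y \<Rightarrow> 'y" and nmY E
    using inv_bop_dsum_lp_space_exponents_eq[OF \<open>0 < p\<close> \<open>0 < q\<close>] complex_banach_norm_zero[OF that]
      \<open>p \<noteq> q\<close> by blast
  moreover have "\<not> inv_bop (dsum (lp_space p) (type_space scX nmX)) (lp_space q) F"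
    if "complex_banach scX nmX" for scX :: "complex \<Rightarrow> 'x \<Rightarrow> 'x" and nmX F
    using inv_bop_dsum_lp_space_exponents_eq[OF \<open>0 < q\<close> \<open>0 < p\<close>] complex_banach_norm_zero[OF that]
      \<open>p \<noteq> q\<close> by blast
  ultimately show ?thesis
    by blast
qed

end
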